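(* Let $T$ be a tree on $n$ leaves and let $S$ be a minimal isolating set of $T$. Consider the forest $F$ obtained from $T$ by removing all edges in $S$. Then each connected component of $F$ contains exactly one leaf of $T$.
   Context: For a tree $T=(V,E)$, a subset $S\subseteq E$ is an isolating set if for any two distinct leaves $u,v$ there is an edge of $S$ on the path connecting $u$ and $v$. It is minimal if no proper subset of $S$ is an isolating set. *)

theory Defs
  imports Main
begin

definition is_path :: "'a set set \<Rightarrow> 'a list \<Rightarrow> 'a \<Rightarrow> 'a \<Rightarrow> bool" where
  "is_path E p u v \<longleftrightarrow> p \<noteq> [] \<and> hd p = u \<and> last p = v \<and> distinct p \<and>
     (\<forall>i < length p - 1. {p ! i, p ! Suc i} \<in> E)"

definition path_edges :: "'a list \<Rightarrow> 'a set set" where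
  "path_edges p = {{p ! i, p ! Suc i} | i. i < length p - 1}"

definition is_cycle :: "'a set set \<Rightarrow> 'a list \<Rightarrow> bool" where
  "is_cycle E c \<longleftrightarrow> length c \<ge> 3 \<and> distinct c \<and>
     (\<forall>i < length c - 1. {c ! i, c ! Suc i} \<in> E) \<and> {last c, hd c} \<in> E"

definition is_tree :: "'a set \<Rightarrow> 'a set set \<Rightarrow> bool" where
  "is_tree V E \<longleftrightarrow> finite V \<and> V \<noteq> {} \<and>
     (\<forall>e \<in> E. \<exists>x y. x \<noteq> y \<and> x \<in> V \<and> y \<in> V \<and> e = {x, y}) \<and>
     (\<forall>u \<in> V. \<forall>v \<in> V. \<exists>p. is_path E p u v) \<and>
     \<not> (\<exists>c. is_cycle E c)"

definition leaves :: "'a set \<Rightarrow> 'a set set \<Rightarrow> 'a set" where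
  "leaves V E = {v \<in> V. card {e \<in> E. v \<in> e} = 1}"

definition isolating_set :: "'a set \<Rightarrow> 'a set set \<Rightarrow> 'a set set \<Rightarrow> bool" where
  "isolating_set V E S \<longleftrightarrow> S \<subseteq> E \<and>
     (\<forall>u \<in> leaves V E. \<forall>v \<in> leaves V E. u \<noteq> v \<longrightarrow>
        (\<forall>p. is_path E p u v \<longrightarrow> path_edges p \<inter> S \<noteq> {}))"

definition minimal_isolating_set :: "'a set \<Rightarrow> 'a set set \<Rightarrow> 'a set set \<Rightarrow> bool" where
  "minimal_isolating_set V E S \<longleftrightarrow> isolating_set V E S \<and>
     (\<forall>S'. S' \<subset> S \<longrightarrow> \<not> isolating_set V E S')"

definition component :: "'a set \<Rightarrow> 'a set set \<Rightarrow> 'a \<Rightarrow> 'a set" where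
  "component V F x = {y \<in> V. \<exists>p. is_path F p x y}"

definition components :: "'a set \<Rightarrow> 'a set set \<Rightarrow> 'a set set" where
  "components V F = component V F ` V"

end

theory Submission
  imports Defs
begin

text \<open>
  If two leaves lay in one component of T - S, the path joining them would avoid S, contradicting
  that S isolates. Every component contains a leaf: by
  minimality, each e \<in> S is the only edge of S on some path between two leaves, so both ends of e
  are joined to a leaf by the rest of that path; and a component touching no edge of S is closed
  under all tree edges, hence is the whole tree, which has a leaf (the end of a longest path).
\<close>

definition edge_rel :: "'a set set \<Rightarrow> ('a \<times> 'a) set" where
  "edge_rel F = {(x, y). {x, y} \<in> F}"

lemma sym_edge_rel: "sym (edge_rel F)"
  by (auto simp: edge_rel_def sym_def insert_commute)

lemma rtrancl_edge_rel_nth: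
  assumes "\<And>j. a \<le> j \<Longrightarrow> j < b \<Longrightarrow> {p ! j, p ! Suc j} \<in> F" and "a \<le> b"
  shows "(p ! a, p ! b) \<in> (edge_rel F)\<^sup>*"
  using assms(2,1)
proof (induction b rule: dec_induct)
  case (step n)
  then have "(p ! n, p ! Suc n) \<in> edge_rel F" by (simp add: edge_rel_def)
  with step show ?case by (meson le_refl less_Suc_eq rtrancl.rtrancl_into_rtrancl le_trans)
qed simp

lemma is_path_nth_edge:
  "is_path F p u v \<Longrightarrow> i < length p - 1 \<Longrightarrow> {p ! i, p ! Suc i} \<in> F"
  by (simp add: is_path_def)

lemma is_path_hd_last_nth:
  assumes "is_path F p u v"
  shows "p ! 0 = u" and "p ! (length p - 1) = v"
  using assms by (auto simp: is_path_def hd_conv_nth last_conv_nth)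

lemma is_path_imp_rtrancl: "is_path F p u v \<Longrightarrow> (u, v) \<in> (edge_rel F)\<^sup>*"
  using rtrancl_edge_rel_nth[of 0 "length p - 1" p F] is_path_hd_last_nth[of F p u v]
  by (simp add: is_path_nth_edge)

lemma is_path_Cons:
  assumes "is_path F p w v" and "{u, w} \<in> F" and "u \<notin> set p"
  shows "is_path F (u # p) u v"
  unfolding is_path_def
proof (intro conjI allI impI)
  fix i assume "i < length (u # p) - 1"
  with assms show "{(u # p) ! i, (u # p) ! Suc i} \<in> F"
    by (cases i) (auto simp: is_path_def hd_conv_nth)
qed (use assms in \<open>auto simp: is_path_def\<close>)

lemma is_path_snoc:
  assumes "is_path F p u v" and "{v, w} \<in> F" and "w \<notin> set p"
  shows "is_path F (p @ [w]) u w"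
  unfolding is_path_def
proof (intro conjI allI impI)
  fix i assume i: "i < length (p @ [w]) - 1"
  show "{(p @ [w]) ! i, (p @ [w]) ! Suc i} \<in> F"
  proof (cases "i < length p - 1")
    case True
    then show ?thesis using assms(1) by (auto simp: nth_append is_path_def)
  next
    case False
    moreover have "p \<noteq> []" using assms(1) by (simp add: is_path_def)
    ultimately have "i = length p - 1" "Suc i = length p" using i by auto
    then show ?thesis using assms(2) is_path_hd_last_nth(2)[OF assms(1)]
      by (simp add: nth_append)
  qed
qed (use assms in \<open>auto simp: is_path_def\<close>)

lemma is_path_drop:
  "is_path F p u v \<Longrightarrow> k < length p \<Longrightarrow> is_path F (drop k p) (p ! k) v"
  by (auto simp: is_path_def hd_drop_conv_nth)

lemma rtrancl_imp_ex_is_path: "(u, v) \<in> (edge_rel F)\<^sup>* \<Longrightarrow> \<exists>p. is_path F p u v"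
proof (induction rule: converse_rtrancl_induct)
  case base
  have "is_path F [v] v v" by (simp add: is_path_def)
  then show ?case by blast
next
  case (step u w)
  then obtain p where p: "is_path F p w v" by blast
  have uw: "{u, w} \<in> F" using step(1) by (simp add: edge_rel_def)
  show ?case
  proof (cases "u \<in> set p")
    case True
    then obtain k where "k < length p" "p ! k = u" by (auto simp: in_set_conv_nth)
    then show ?thesis using is_path_drop[OF p] by metis
  next
    case False
    then show ?thesis using is_path_Cons[OF p uw] by blast
  qed
qed

lemma component_eq_rtrancl: "component V F x = {y \<in> V. (x, y) \<in> (edge_rel F)\<^sup>*}"
  unfolding component_def by (meson is_path_imp_rtrancl rtrancl_imp_ex_is_path)

lemma path_edges_subset: "is_path F p u v \<Longrightarrow> path_edges p \<subseteq> F"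
  by (auto simp: is_path_def path_edges_def)

lemma is_path_mono: "is_path F p u v \<Longrightarrow> F \<subseteq> G \<Longrightarrow> is_path G p u v"
  by (auto simp: is_path_def)

lemma path_edge_index_unique:
  assumes "distinct p" and "i < length p - 1" and "j < length p - 1"
    and "{p ! j, p ! Suc j} = {p ! i, p ! Suc i}"
  shows "j = i"
proof -
  have "j = i \<or> j = Suc i" and "Suc j = i \<or> Suc j = Suc i"
    using assms by (auto simp: doubleton_eq_iff nth_eq_iff_index_eq)
  then show ?thesis by auto
qed

lemma is_tree_edge_subset: "is_tree V E \<Longrightarrow> e \<in> E \<Longrightarrow> e \<subseteq> V"
  by (fastforce simp: is_tree_def)

lemma is_tree_edge_other_end:
  "is_tree V E \<Longrightarrow> e \<in> E \<Longrightarrow> v \<in> e \<Longrightarrow> \<exists>w. w \<noteq> v \<and> e = {v, w}"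
  unfolding is_tree_def by (metis empty_iff insert_commute insert_iff)

lemma set_path_subset:
  assumes "\<And>e. e \<in> F \<Longrightarrow> e \<subseteq> V" and "is_path F p u v" and "u \<in> V"
  shows "set p \<subseteq> V"
proof
  fix z assume "z \<in> set p"
  then obtain i where i: "i < length p" "p ! i = z" by (auto simp: in_set_conv_nth)
  show "z \<in> V"
  proof (cases i)
    case 0
    then show ?thesis using i assms(2,3) is_path_hd_last_nth(1) by metis
  next
    case (Suc k)
    then have "{p ! k, p ! i} \<in> F" using i is_path_nth_edge[OF assms(2), of k] by simp
    then show ?thesis using assms(1) i by blast
  qed
qed

lemma is_cycle_drop_chord:
  assumes p: "is_path F p u v" and j: "j + 3 \<le> length p" and chord: "{v, p ! j} \<in> F"
  shows "is_cycle F (drop j p)"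
  unfolding is_cycle_def
proof (intro conjI allI impI)
  fix i assume "i < length (drop j p) - 1"
  then show "{drop j p ! i, drop j p ! Suc i} \<in> F"
    using is_path_nth_edge[OF p, of "j + i"] by simp
next
  have "last (drop j p) = v" "hd (drop j p) = p ! j"
    using is_path_drop[OF p, of j] j by (auto simp: is_path_def)
  then show "{last (drop j p), hd (drop j p)} \<in> F" using chord by simp
qed (use p j in \<open>auto simp: is_path_def\<close>)

text \<open>A second edge at v would lead back into the path and close a cycle.\<close>

lemma unextendable_path_end_is_leaf:
  assumes T: "is_tree V E" and p: "is_path E p u v" and len: "2 \<le> length p" and "u \<in> V"
    and unext: "\<And>w. {v, w} \<in> E \<Longrightarrow> w \<in> set p"
  shows "v \<in> leaves V E"
proof -
  define m where "m = length p"
  define w0 where "w0 = p ! (m - 2)"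
  have last: "p ! (m - 1) = v" using is_path_hd_last_nth(2)[OF p] by (simp add: m_def)
  have w0v: "{w0, v} \<in> E"
    using is_path_nth_edge[OF p, of "m - 2"] len last
    by (simp add: m_def w0_def Suc_diff_Suc numeral_2_eq_2)
  have only_edge: "e = {w0, v}" if e: "e \<in> E" "v \<in> e" for e
  proof (rule ccontr)
    assume ne: "e \<noteq> {w0, v}"
    obtain w where w: "w \<noteq> v" "e = {v, w}" using is_tree_edge_other_end[OF T e] by blast
    then have "w \<in> set p" using unext e by blast
    then obtain j where j: "j < m" "p ! j = w" by (auto simp: in_set_conv_nth m_def)
    have "j \<noteq> m - 1" using j w last by auto
    moreover have "j \<noteq> m - 2" using j w ne by (auto simp: w0_def doubleton_eq_iff)
    ultimately have "j + 3 \<le> length p" using j len by (simp add: m_def)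
    then have "is_cycle E (drop j p)" using is_cycle_drop_chord[OF p] e w j by simp
    then show False using T by (auto simp: is_tree_def)
  qed
  then have "{e \<in> E. v \<in> e} = {{w0, v}}" using w0v only_edge by blast
  moreover have "v \<in> V" using set_path_subset[OF is_tree_edge_subset[OF T] p \<open>u \<in> V\<close>] last len
    by (auto simp: m_def)
  ultimately show ?thesis by (simp add: leaves_def)
qed

lemma tree_has_leaf:
  assumes T: "is_tree V E" and card: "2 \<le> card V"
  shows "\<exists>v. v \<in> leaves V E"
proof -
  have fin: "finite V" using T by (simp add: is_tree_def)
  have "\<not> card V \<le> Suc 0" using card by simp
  then obtain a b where ab: "a \<in> V" "b \<in> V" "a \<noteq> b"
    using card_le_Suc0_iff_eq[OF fin] by blast
  then obtain q where q: "is_path E q a b" using T unfolding is_tree_def by blast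
  have "q \<noteq> []" "hd q \<noteq> last q" using q ab by (auto simp: is_path_def)
  then have "2 \<le> length q" by (cases q) (auto simp: Suc_le_eq split: if_splits)
  let ?P = "\<lambda>p. is_path E p a (last p)"
  have bounded: "length p < card V + 1" if "?P p" for p
  proof -
    have "set p \<subseteq> V" using set_path_subset[OF is_tree_edge_subset[OF T] that ab(1)] .
    then have "card (set p) \<le> card V" using card_mono[OF fin] by blast
    then show ?thesis using that distinct_card by (fastforce simp: is_path_def)
  qed
  have "?P q" using q by (simp add: is_path_def)
  then obtain p where p: "?P p" and longest: "\<And>p'. ?P p' \<Longrightarrow> length p' \<le> length p"
    using Lattices_Big.ex_has_greatest_nat[of ?P q length "card V + 1"] bounded by blast
  have "last p \<in> leaves V E"
  proof (rule unextendable_path_end_is_leaf[OF T p _ ab(1)])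
    show "2 \<le> length p" using longest[OF \<open>?P q\<close>] \<open>2 \<le> length q\<close> by simp
  next
    fix w assume "{last p, w} \<in> E"
    then have "w \<notin> set p \<Longrightarrow> ?P (p @ [w])" using is_path_snoc[OF p] by simp
    then show "w \<in> set p" using longest[of "p @ [w]"] by force
  qed
  then show ?thesis by blast
qed

lemma leaves_subset: "leaves V E \<subseteq> V"
  by (auto simp: leaves_def)

lemma isolating_set_separates_leaves:
  assumes iso: "isolating_set V E S" and "u \<in> leaves V E" "v \<in> leaves V E"
    and "(u, v) \<in> (edge_rel (E - S))\<^sup>*"
  shows "u = v"
proof (rule ccontr)
  assume "u \<noteq> v"
  obtain p where p: "is_path (E - S) p u v" using rtrancl_imp_ex_is_path[OF assms(4)] by blast
  have "is_path E p u v" using is_path_mono[OF p] by blast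
  moreover have "path_edges p \<inter> S = {}" using path_edges_subset[OF p] by blast
  ultimately show False using iso assms(2,3) \<open>u \<noteq> v\<close> unfolding isolating_set_def by blast
qed

lemma minimal_isolating_set_edge_reaches_leaf:
  assumes min: "minimal_isolating_set V E S" and e: "e \<in> S" and a: "a \<in> e"
  shows "\<exists>l \<in> leaves V E. (a, l) \<in> (edge_rel (E - S))\<^sup>*"
proof -
  let ?R = "edge_rel (E - S)"
  have iso: "isolating_set V E S" and niso: "\<not> isolating_set V E (S - {e})"
    using min e by (auto simp: minimal_isolating_set_def)
  have "S - {e} \<subseteq> E" using iso by (auto simp: isolating_set_def)
  with niso obtain u v p where u: "u \<in> leaves V E" and v: "v \<in> leaves V E" and "u \<noteq> v"
    and p: "is_path E p u v" and avoid: "path_edges p \<inter> (S - {e}) = {}"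
    unfolding isolating_set_def by blast
  then have "path_edges p \<inter> S \<noteq> {}" using iso unfolding isolating_set_def by blast
  with avoid have "e \<in> path_edges p" by blast
  then obtain i where i: "i < length p - 1" and e_eq: "e = {p ! i, p ! Suc i}"
    unfolding path_edges_def by blast
  have dist: "distinct p" using p by (simp add: is_path_def)
  have rest: "{p ! j, p ! Suc j} \<in> E - S" if j: "j < length p - 1" "j \<noteq> i" for j
  proof -
    have "{p ! j, p ! Suc j} \<noteq> e"
      using path_edge_index_unique[OF dist i j(1)] e_eq j(2) by blast
    moreover have "{p ! j, p ! Suc j} \<in> path_edges p" unfolding path_edges_def using j(1) by blast
    ultimately show ?thesis using is_path_nth_edge[OF p j(1)] avoid by blast
  qed
  have "(p ! 0, p ! i) \<in> ?R\<^sup>*" using rest i by (intro rtrancl_edge_rel_nth) auto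
  then have "(u, p ! i) \<in> ?R\<^sup>*" using is_path_hd_last_nth(1)[OF p] by simp
  then have to_u: "(p ! i, u) \<in> ?R\<^sup>*" by (rule symD[OF sym_rtrancl[OF sym_edge_rel]])
  have "(p ! Suc i, p ! (length p - 1)) \<in> ?R\<^sup>*" using rest i by (intro rtrancl_edge_rel_nth) auto
  then have to_v: "(p ! Suc i, v) \<in> ?R\<^sup>*" using is_path_hd_last_nth(2)[OF p] by simp
  have "a = p ! i \<or> a = p ! Suc i" using a e_eq by blast
  then show ?thesis using to_u to_v u v by blast
qed

lemma rtrancl_edge_rel_Diff_if_untouched:
  assumes "(x, y) \<in> (edge_rel E)\<^sup>*"
    and untouched: "\<And>z e. (x, z) \<in> (edge_rel (E - S))\<^sup>* \<Longrightarrow> e \<in> S \<Longrightarrow> z \<notin> e"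
  shows "(x, y) \<in> (edge_rel (E - S))\<^sup>*"
  using assms(1)
proof (induction rule: rtrancl_induct)
  case (step w z)
  then have "{w, z} \<in> E - S" using untouched[of w "{w, z}"] by (auto simp: edge_rel_def)
  with step.IH show ?case by (auto simp: edge_rel_def intro: rtrancl_into_rtrancl)
qed simp

lemma minimal_isolating_set_reaches_leaf:
  assumes T: "is_tree V E" and "2 \<le> card V" and min: "minimal_isolating_set V E S" and x: "x \<in> V"
  shows "\<exists>l \<in> leaves V E. (x, l) \<in> (edge_rel (E - S))\<^sup>*"
proof (cases "\<exists>z e. (x, z) \<in> (edge_rel (E - S))\<^sup>* \<and> e \<in> S \<and> z \<in> e")
  case True
  then obtain z e where xz: "(x, z) \<in> (edge_rel (E - S))\<^sup>*" and ez: "e \<in> S" "z \<in> e"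
    by blast
  obtain l where "l \<in> leaves V E" "(z, l) \<in> (edge_rel (E - S))\<^sup>*"
    using minimal_isolating_set_edge_reaches_leaf[OF min ez] by blast
  then show ?thesis using rtrancl_trans[OF xz] by blast
next
  case False
  obtain l where l: "l \<in> leaves V E" using tree_has_leaf[OF assms(1,2)] by blast
  then have "l \<in> V" using leaves_subset[of V E] by blast
  then obtain p where "is_path E p x l" using T x unfolding is_tree_def by blast
  then have "(x, l) \<in> (edge_rel E)\<^sup>*" by (rule is_path_imp_rtrancl)
  moreover have "z \<notin> e" if "(x, z) \<in> (edge_rel (E - S))\<^sup>*" "e \<in> S" for z e
    using False that by blast
  ultimately have "(x, l) \<in> (edge_rel (E - S))\<^sup>*" by (rule rtrancl_edge_rel_Diff_if_untouched)
  then show ?thesis using l by blast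
qed

theorem proposition3:
  fixes V :: "'a set" and E S :: "'a set set"
  assumes "is_tree V E"
    and "card V \<ge> 2"
    and "minimal_isolating_set V E S"
  shows "\<forall>C \<in> components V (E - S). card (C \<inter> leaves V E) = 1"
proof
  fix C assume "C \<in> components V (E - S)"
  then obtain x where x: "x \<in> V" and C: "C = {y \<in> V. (x, y) \<in> (edge_rel (E - S))\<^sup>*}"
    by (auto simp: components_def component_eq_rtrancl)
  obtain l where l: "l \<in> leaves V E" "(x, l) \<in> (edge_rel (E - S))\<^sup>*"
    using minimal_isolating_set_reaches_leaf[OF assms x] by blast
  have "l' = l" if "l' \<in> C \<inter> leaves V E" for l'
  proof -
    have "(l, x) \<in> (edge_rel (E - S))\<^sup>*"
      using l(2) by (rule symD[OF sym_rtrancl[OF sym_edge_rel]])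
    moreover have "(x, l') \<in> (edge_rel (E - S))\<^sup>*" using that C by blast
    ultimately have "(l, l') \<in> (edge_rel (E - S))\<^sup>*" by (rule rtrancl_trans)
    moreover have "isolating_set V E S" using assms(3) by (simp add: minimal_isolating_set_def)
    ultimately show ?thesis using isolating_set_separates_leaves l(1) that by (metis IntD2)
  qed
  moreover have "l \<in> C" using l leaves_subset[of V E] unfolding C by blast
  ultimately have "C \<inter> leaves V E = {l}" using l(1) by blast
  then show "card (C \<inter> leaves V E) = 1" by simp
qed

end
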